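(* Let $Q\in\mathbb{R}^{N\times N}$ be symmetric positive definite, $c\in\mathbb{R}^N$, and consider the convex quadratic program $\min_{z\in\mathbb{R}^N}\ \tfrac12 z^TQz-c^Tz$, with unique minimizer $z^*$. Let $\mathcal{N}=\{1,\dots,N\}$ be partitioned into nonempty disjoint sets $\mathcal{N}_1,\dots,\mathcal{N}_K$, and let the lifted data $Q_k,c_k,\Pi_{kk'}$ ($k,k'\in\{1,\dots,K\}$) be constructed as described in the context. Consider the Gauss–Seidel (GS) scheme: starting from arbitrary initial vectors $z_k^0\in\mathbb{R}^{N_k+\underline{N}_k}$, $\lambda_k^0\in\mathbb{R}^{\underline{N}_k}$, for $\ell=0,1,2,\dots$ and for $k=1,2,\dots,K$ in this order, let $z_k^{\ell+1}$ and $\lambda_k^{\ell+1}$ be the primal solution and the multiplier of the equality constraint of \[ \min_{z_k}\ \tfrac12 z_k^TQ_kz_k-z_k^T\Big(c_k-\sum_{k'=1}^{k-1}\Pi_{k'k}^T\lambda_{k'}^{\ell+1}-\sum_{k'=k+1}^{K}\Pi_{k'k}^T\lambda_{k'}^{\ell}\Big) \] \[ \text{s.t.}\quad \Pi_{kk}z_k+\sum_{k'=1}^{k-1}\Pi_{kk'}z_{k'}^{\ell+1}+\sum_{k'=k+1}^{K}\Pi_{kk'}z_{k'}^{\ell}=0\quad(\lambda_k), \] i.e. $(z_k^{\ell+1},\lambda_k^{\ell+1})$ solves $\begin{bmatrix}Q_k&\Pi_{kk}^T\\ \Pi_{kk}&0\end{bmatrix}\begin{bmatrix}z_k^{\ell+1}\\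 \lambda_k^{\ell+1}\end{bmatrix}=\begin{bmatrix}c_k\\0\end{bmatrix}-\sum_{k'<k}\begin{bmatrix}\Pi_{k'k}^T\lambda_{k'}^{\ell+1}\\ \Pi_{kk'}z_{k'}^{\ell+1}\end{bmatrix}-\sum_{k'>k}\begin{bmatrix}\Pi_{k'k}^T\lambda_{k'}^{\ell}\\ \Pi_{kk'}z_{k'}^{\ell}\end{bmatrix}$. Define the block matrices (blocks indexed by $k,k'\in\{1,\dots,K\}$, with block rows/columns of sizes matching $z_1,\dots,z_K$ and $\lambda_1,\dots,\lambda_K$) \[ L:=\begin{bmatrix}D & M\\ P & 0\end{bmatrix},\qquad R:=\begin{bmatrix}0 & G\\ H & 0\end{bmatrix}, \] where $D=\mathrm{blockdiag}(Q_1,\dots,Q_K)$; $M$ has $(k,k')$ block $\Pi_{k'k}^T$ if $k'\le k$ and $0$ otherwise; $P$ has $(k,k')$ block $\Pi_{kk'}$ if $k'\le k$ and $0$ otherwise; $G$ has $(k,k')$ block $-\Pi_{k'k}^T$ if $k'>k$ and $0$ otherwise; $H$ has $(k,k')$ block $-\Pi_{kk'}$ if $k'>k$ and $0$ otherwise. Let $\Sigma:=L^{-1}R$. If all eigenvalues of $\Sigma$ have magnitude less than one, then the GS scheme converges to the solution of the quadratic program, i.e. for every $k$, $z_k^\ell\to \bar z_k^*$ as $\ell\to\infty$, where $\bar z_k^*$ is the vector with entries $z^*(k_1),\dots,z^*(k_{N_k+\underline{N}_k})$.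
   Context: Lifting construction. For each $k$, let $\underline{\mathcal{N}}_k:=\{j\in\mathcal{N}\setminus\mathcal{N}_k:\exists\, i\in\mathcal{N}_k \text{ with } Q_{ij}\neq 0\}$ and $\overline{\mathcal{N}}_k:=\mathcal{N}_k\cup\underline{\mathcal{N}}_k$. Write $\mathcal{N}_k=\{k_1,\dots,k_{N_k}\}$ and $\underline{\mathcal{N}}_k=\{k_{N_k+1},\dots,k_{N_k+\underline{N}_k}\}$, with $N_k=|\mathcal{N}_k|$, $\underline{N}_k=|\underline{\mathcal{N}}_k|$. The lifted variable of partition $k$ is $z_k\in\mathbb{R}^{N_k+\underline{N}_k}$, whose $i$-th entry is a copy of the original variable $z(k_i)$ (the last $\underline{N}_k$ entries are duplicates of variables owned by other partitions). The matrix $Q_k\in\mathbb{R}^{(N_k+\underline N_k)\times(N_k+\underline N_k)}$ has entries $(Q_k)_{ij}=Q_{k_ik_j}$ if $k_i,k_j\in\mathcal{N}_k$; $(Q_k)_{ij}=\tfrac12 Q_{k_ik_j}$ if exactly one of $k_i,k_j$ lies in $\mathcal{N}_k$; and $0$ otherwise. The vector $c_k$ has entries $(c_k)_i=c_{k_i}$ if $k_i\in\mathcal{N}_k$ and $0$ otherwise. The matrix $\Pi_{kk}\in\mathbb{R}^{\underline{N}_k\times(N_k+\underline{N}_k)}$ has rows $e_{N_k+1}^T,\dots,e_{N_k+\underline{N}_k}^T$ (elementary unit vectors). For $k'\neq k$, $\Pi_{kk'}\in\mathbb{R}^{\underline N_k\times(N_{k'}+\underline N_{k'})}$ has, in row $r$,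 an entry $-1$ at the position $s\le N_{k'}$ with $k'_s=k_{N_k+r}$ if $k_{N_k+r}\in\mathcal{N}_{k'}$, and is zero otherwise; thus the constraints $\sum_{k'}\Pi_{kk'}z_{k'}=0$ force each duplicate in partition $k$ to equal the corresponding variable owned by another partition. The lifted problem is $\min\sum_k \tfrac12 z_k^TQ_kz_k-c_k^Tz_k$ s.t. $\sum_{k'}\Pi_{kk'}z_{k'}=0$ ($k=1,\dots,K$), with multipliers $\lambda_k$. *)

theory Defs
  imports "HOL-Analysis.Analysis" "Jordan_Normal_Form.Char_Poly" "Jordan_Normal_Form.Gauss_Jordan_Elimination"
begin

text \<open>Indices of original variables are 0..N-1, partitions are 0..K-1 (order preserved).
  own k enumerates N_k (the k_1..k_{N_k}), dup k enumerates the coupled set (k_{N_k+1},...).\<close>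

definition dupset :: "real mat \<Rightarrow> nat \<Rightarrow> (nat \<Rightarrow> nat set) \<Rightarrow> nat \<Rightarrow> nat set" where
  "dupset Q N Ns k = {j \<in> {..<N} - Ns k. \<exists>i\<in>Ns k. Q $$ (i, j) \<noteq> 0}"

definition nbar :: "(nat \<Rightarrow> nat list) \<Rightarrow> (nat \<Rightarrow> nat list) \<Rightarrow> nat \<Rightarrow> nat list" where
  "nbar own dup k = own k @ dup k"

definition lenk :: "(nat \<Rightarrow> nat list) \<Rightarrow> (nat \<Rightarrow> nat list) \<Rightarrow> nat \<Rightarrow> nat" where
  "lenk own dup k = length (own k) + length (dup k)"

definition Qloc :: "real mat \<Rightarrow> (nat \<Rightarrow> nat set) \<Rightarrow> (nat \<Rightarrow> nat list) \<Rightarrow> (nat \<Rightarrow> nat list) \<Rightarrow> nat \<Rightarrow> real mat" where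
  "Qloc Q Ns own dup k = mat (lenk own dup k) (lenk own dup k) (\<lambda>(i, j).
     let a = nbar own dup k ! i; b = nbar own dup k ! j in
     if a \<in> Ns k \<and> b \<in> Ns k then Q $$ (a, b)
     else if a \<in> Ns k \<or> b \<in> Ns k then Q $$ (a, b) / 2 else 0)"

definition cloc :: "real vec \<Rightarrow> (nat \<Rightarrow> nat set) \<Rightarrow> (nat \<Rightarrow> nat list) \<Rightarrow> (nat \<Rightarrow> nat list) \<Rightarrow> nat \<Rightarrow> real vec" where
  "cloc c Ns own dup k = vec (lenk own dup k) (\<lambda>i.
     if nbar own dup k ! i \<in> Ns k then c $ (nbar own dup k ! i) else 0)"

definition PiM :: "(nat \<Rightarrow> nat list) \<Rightarrow> (nat \<Rightarrow> nat list) \<Rightarrow> nat \<Rightarrow> nat \<Rightarrow> real mat" where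
  "PiM own dup k k' =
     (if k = k' then mat (length (dup k)) (lenk own dup k) (\<lambda>(r, s). if s = length (own k) + r then 1 else 0)
      else mat (length (dup k)) (lenk own dup k') (\<lambda>(r, s).
        if s < length (own k') \<and> own k' ! s = dup k ! r then -1 else 0))"

definition off :: "(nat \<Rightarrow> nat) \<Rightarrow> nat \<Rightarrow> nat" where
  "off sz k = (\<Sum>k'<k. sz k')"

definition blk :: "(nat \<Rightarrow> nat) \<Rightarrow> nat \<Rightarrow> nat" where
  "blk sz p = (LEAST k. p < off sz (Suc k))"

definition blockmat :: "nat \<Rightarrow> (nat \<Rightarrow> nat) \<Rightarrow> (nat \<Rightarrow> nat) \<Rightarrow> (nat \<Rightarrow> nat \<Rightarrow> real mat) \<Rightarrow> real mat" where
  "blockmat K rs cs f = mat (off rs K) (off cs K) (\<lambda>(p, q).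
     let k = blk rs p; k' = blk cs q in f k k' $$ (p - off rs k, q - off cs k'))"

definition Lmat :: "real mat \<Rightarrow> (nat \<Rightarrow> nat set) \<Rightarrow> nat \<Rightarrow> (nat \<Rightarrow> nat list) \<Rightarrow> (nat \<Rightarrow> nat list) \<Rightarrow> real mat" where
  "Lmat Q Ns K own dup =
     (let zs = lenk own dup; ls = (\<lambda>k. length (dup k));
          D = blockmat K zs zs (\<lambda>k k'. if k = k' then Qloc Q Ns own dup k else 0\<^sub>m (zs k) (zs k'));
          M = blockmat K zs ls (\<lambda>k k'. if k' \<le> k then transpose_mat (PiM own dup k' k) else 0\<^sub>m (zs k) (ls k'));
          P = blockmat K ls zs (\<lambda>k k'. if k' \<le> k then PiM own dup k k' else 0\<^sub>m (ls k) (zs k'))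
      in four_block_mat D M P (0\<^sub>m (off ls K) (off ls K)))"

definition Rmat :: "nat \<Rightarrow> (nat \<Rightarrow> nat list) \<Rightarrow> (nat \<Rightarrow> nat list) \<Rightarrow> real mat" where
  "Rmat K own dup =
     (let zs = lenk own dup; ls = (\<lambda>k. length (dup k));
          G = blockmat K zs ls (\<lambda>k k'. if k < k' then - transpose_mat (PiM own dup k' k) else 0\<^sub>m (zs k) (ls k'));
          H = blockmat K ls zs (\<lambda>k k'. if k < k' then - PiM own dup k k' else 0\<^sub>m (ls k) (zs k'))
      in four_block_mat (0\<^sub>m (off zs K) (off zs K)) G H (0\<^sub>m (off ls K) (off ls K)))"

text \<open>Sigma = L^{-1} R (L is invertible under the hypotheses of the theorem).\<close>
definition Sigma :: "real mat \<Rightarrow> (nat \<Rightarrow> nat set) \<Rightarrow> nat \<Rightarrow> (nat \<Rightarrow> nat list) \<Rightarrow> (nat \<Rightarrow> nat list) \<Rightarrow> real mat" where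
  "Sigma Q Ns K own dup = the (mat_inverse (Lmat Q Ns K own dup)) * Rmat K own dup"

end

(*
  Stack the copies z_k and the multipliers lambda_k of all partitions into one vector w.  One
  Gauss-Seidel sweep is then exactly L w^(l+1) = b + R w^l.  The matrix L is block lower
  triangular with the local KKT matrices [Q_k Pi_kk^T; Pi_kk 0] on its diagonal, and these are
  nonsingular because Q is positive definite on the variables owned by partition k.  So the
  sweep is the splitting iteration w^(l+1) = Sigma w^l + L^-1 b, whose error decays
  geometrically when the spectral radius of Sigma = L^-1 R is below one.  Its limit is the fixed
  point L w = b + R w, i.e. a KKT point of the lifted problem.  Such a point is given by the
  copies of the minimizer z* (which satisfies Q z* = c), together with the multipliers
  lambda_k(a) = -1/2 sum_{b in N_k} Q_ab z*_b.
*)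

theory Submission
  imports Defs "Jordan_Normal_Form.Spectral_Radius"
begin

lemma sum_lessThan_add: "(\<Sum>q<a + b. h q) = (\<Sum>q<a. h q) + (\<Sum>q<b. h (a + q :: nat))"
  by (induction b) (simp_all add: ac_simps)

lemma sum_lessThan_split_at:
  fixes F :: "nat \<Rightarrow> 'a :: comm_monoid_add"
  assumes "k < K"
  shows "(\<Sum>k'<K. F k') = (\<Sum>k'<k. F k') + F k + (\<Sum>k'\<in>{k<..<K}. F k')"
proof -
  have "(\<Sum>k'<K. F k') = (\<Sum>k'<Suc k. F k') + (\<Sum>k'=Suc k..<K. F k')"
    using sum.atLeastLessThan_concat[of 0 "Suc k" K F] assms by (simp add: atLeast0LessThan)
  then show ?thesis unfolding atLeastSucLessThan_greaterThanLessThan sum.lessThan_Suc .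
qed

lemma sum_if_le_split:
  fixes F :: "nat \<Rightarrow> 'a :: comm_monoid_add"
  assumes "k < K"
  shows "(\<Sum>k'<K. if k' \<le> k then F k' else 0) = (\<Sum>k'<k. F k') + F k"
  using sum_lessThan_split_at[OF assms, of "\<lambda>k'. if k' \<le> k then F k' else 0"] by simp

lemma sum_if_gt:
  fixes F :: "nat \<Rightarrow> 'a :: comm_monoid_add"
  shows "(\<Sum>k'<K. if k < k' then F k' else 0) = (\<Sum>k'\<in>{k<..<K}. F k')"
proof -
  have "(\<Sum>k'<K. if k < k' then F k' else 0) = (\<Sum>k'\<in>{k'\<in>{..<K}. k < k'}. F k')"
    by (rule sum.inter_filter[symmetric]) simp
  also have "{k'\<in>{..<K}. k < k'} = {k<..<K}" by auto
  finally show ?thesis .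
qed

lemma sum_distinct_nth: "distinct xs \<Longrightarrow> (\<Sum>j<length xs. F (xs ! j)) = (\<Sum>x\<in>set xs. F x)"
  by (simp add: sum.distinct_set_conv_list sum_list_sum_nth atLeast0LessThan)

lemma sum_scatter:
  fixes xs :: "nat list" and g :: "nat \<Rightarrow> 'a :: comm_semiring_1"
  assumes "set xs \<subseteq> {..<N}"
  shows "(\<Sum>b<N. g b * (\<Sum>j<length xs. if xs ! j = b then w j else 0)) = (\<Sum>j<length xs. g (xs ! j) * w j)"
proof -
  have "(\<Sum>b<N. g b * (\<Sum>j<length xs. if xs ! j = b then w j else 0))
      = (\<Sum>b<N. \<Sum>j<length xs. if xs ! j = b then g b * w j else 0)"
    unfolding sum_distrib_left by (intro sum.cong refl) simp
  also have "\<dots> = (\<Sum>j<length xs. \<Sum>b<N. if xs ! j = b then g b * w j else 0)"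
    by (rule sum.swap)
  also have "\<dots> = (\<Sum>j<length xs. g (xs ! j) * w j)"
    using assms nth_mem by (intro sum.cong refl) (fastforce simp: sum.delta)
  finally show ?thesis .
qed

lemma off_Suc [simp]: "off sz (Suc k) = off sz k + sz k"
  unfolding off_def by simp

lemma off_0 [simp]: "off sz 0 = 0"
  unfolding off_def by simp

lemma off_mono: "k \<le> k' \<Longrightarrow> off sz k \<le> off sz k'"
  unfolding off_def by (rule sum_mono2) auto

lemma off_add_less: "k < K \<Longrightarrow> j < sz k \<Longrightarrow> off sz k + j < off sz K"
  using off_mono[of "Suc k" K sz] by simp

lemma blk_off_add: assumes "j < sz k" shows "blk sz (off sz k + j) = k"
  unfolding blk_def
proof (rule Least_equality)
  show "off sz k + j < off sz (Suc k)" using assms by simp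
  fix y assume y: "off sz k + j < off sz (Suc y)"
  show "k \<le> y"
  proof (rule ccontr)
    assume "\<not> k \<le> y"
    then have "off sz (Suc y) \<le> off sz k" by (intro off_mono) simp
    then show False using y by linarith
  qed
qed

lemma off_blk_cases:
  assumes "p < off sz K"
  obtains k j where "k < K" "j < sz k" "p = off sz k + j"
proof -
  have "\<exists>k<K. \<exists>j<sz k. p = off sz k + j"
    using assms
  proof (induction K)
    case (Suc K)
    show ?case
    proof (cases "p < off sz K")
      case True
      then show ?thesis using Suc.IH less_SucI by blast
    next
      case False
      then have "p - off sz K < sz K" using Suc.prems by simp
      then show ?thesis using False by (intro exI[of _ K]) auto
    qed
  qed simp
  then show ?thesis using that by blast
qed

lemma sum_blocks: "(\<Sum>q<off sz K. g q) = (\<Sum>k<K. \<Sum>j<sz k. g (off sz k + j))"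
  by (induction K) (simp_all add: sum_lessThan_add)

definition block_vec :: "nat \<Rightarrow> (nat \<Rightarrow> nat) \<Rightarrow> (nat \<Rightarrow> nat \<Rightarrow> 'a) \<Rightarrow> 'a vec" where
  "block_vec K sz x = vec (off sz K) (\<lambda>p. x (blk sz p) (p - off sz (blk sz p)))"

lemma block_vec_carrier [simp]: "block_vec K sz x \<in> carrier_vec (off sz K)"
  unfolding block_vec_def by simp

lemma dim_block_vec [simp]: "dim_vec (block_vec K sz x) = off sz K"
  unfolding block_vec_def by simp

lemma index_block_vec [simp]: "k < K \<Longrightarrow> j < sz k \<Longrightarrow> block_vec K sz x $ (off sz k + j) = x k j"
  unfolding block_vec_def by (simp add: off_add_less blk_off_add)

lemma block_vec_eq_iff: "block_vec K sz x = block_vec K sz y \<longleftrightarrow> (\<forall>k<K. \<forall>j<sz k. x k j = y k j)"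
proof
  assume eq: "block_vec K sz x = block_vec K sz y"
  show "\<forall>k<K. \<forall>j<sz k. x k j = y k j"
  proof (intro allI impI)
    fix k j assume "k < K" "j < sz k"
    then show "x k j = y k j" using arg_cong[OF eq, of "\<lambda>v. v $ (off sz k + j)"] by simp
  qed
next
  assume xy: "\<forall>k<K. \<forall>j<sz k. x k j = y k j"
  show "block_vec K sz x = block_vec K sz y"
  proof (rule eq_vecI)
    fix p assume "p < dim_vec (block_vec K sz y)"
    then obtain k j where "k < K" "j < sz k" "p = off sz k + j" by (auto elim: off_blk_cases)
    then show "block_vec K sz x $ p = block_vec K sz y $ p" using xy by simp
  qed simp
qed

lemma block_vec_cong: "(\<And>k j. k < K \<Longrightarrow> j < sz k \<Longrightarrow> x k j = y k j) \<Longrightarrow> block_vec K sz x = block_vec K sz y"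
  by (simp add: block_vec_eq_iff)

lemma block_vec_of_vec:
  assumes "v \<in> carrier_vec (off sz K)"
  shows "v = block_vec K sz (\<lambda>k j. v $ (off sz k + j))"
proof (rule eq_vecI)
  fix p assume "p < dim_vec (block_vec K sz (\<lambda>k j. v $ (off sz k + j)))"
  then obtain k j where "k < K" "j < sz k" "p = off sz k + j" by (auto elim: off_blk_cases)
  then show "v $ p = block_vec K sz (\<lambda>k j. v $ (off sz k + j)) $ p" by simp
qed (use assms in simp)

lemma add_block_vec: "block_vec K sz x + block_vec K sz y = block_vec K sz (\<lambda>k j. x k j + y k j)"
proof (rule eq_vecI)
  fix p assume "p < dim_vec (block_vec K sz (\<lambda>k j. x k j + y k j))"
  then obtain k j where "k < K" "j < sz k" "p = off sz k + j" by (auto elim: off_blk_cases)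
  then show "(block_vec K sz x + block_vec K sz y) $ p = block_vec K sz (\<lambda>k j. x k j + y k j) $ p"
    by (simp add: off_add_less)
qed simp

lemma zero_block_vec: "0\<^sub>v (off sz K) = block_vec K sz (\<lambda>k j. 0)"
proof (rule eq_vecI)
  fix p assume "p < dim_vec (block_vec K sz (\<lambda>k j. 0 :: 'a))"
  then obtain k j where "k < K" "j < sz k" "p = off sz k + j" by (auto elim: off_blk_cases)
  then show "0\<^sub>v (off sz K) $ p = block_vec K sz (\<lambda>k j. 0) $ p" by (simp add: off_add_less)
qed simp

lemma zero_append_vec: "0\<^sub>v (n1 + n2) = 0\<^sub>v n1 @\<^sub>v 0\<^sub>v n2"
  by (intro eq_vecI) auto

lemma zero_mat_mult_vec: "v \<in> carrier_vec n \<Longrightarrow> 0\<^sub>m m n *\<^sub>v v = 0\<^sub>v m"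
  by (intro eq_vecI) auto

lemma blockmat_carrier: "blockmat K rs cs F \<in> carrier_mat (off rs K) (off cs K)"
  unfolding blockmat_def by simp

lemma blockmat_mult_block_vec:
  "blockmat K rs cs F *\<^sub>v block_vec K cs x
     = block_vec K rs (\<lambda>k i. \<Sum>k'<K. \<Sum>j<cs k'. F k k' $$ (i, j) * x k' j)"
proof (rule eq_vecI)
  fix p assume "p < dim_vec (block_vec K rs (\<lambda>k i. \<Sum>k'<K. \<Sum>j<cs k'. F k k' $$ (i, j) * x k' j))"
  then obtain k i where k: "k < K" and i: "i < rs k" and p: "p = off rs k + i"
    by (auto elim: off_blk_cases)
  have "(blockmat K rs cs F *\<^sub>v block_vec K cs x) $ p
      = (\<Sum>q<off cs K. blockmat K rs cs F $$ (p, q) * block_vec K cs x $ q)"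
    using k i p off_add_less[of k K i rs]
    by (simp add: blockmat_def mult_mat_vec_def scalar_prod_def atLeast0LessThan)
  also have "\<dots> = (\<Sum>k'<K. \<Sum>j<cs k'. F k k' $$ (i, j) * x k' j)"
    unfolding sum_blocks[of _ cs K]
    using k i p off_add_less[of k K i rs] off_add_less[of _ K _ cs]
    by (intro sum.cong refl) (simp add: blockmat_def blk_off_add)
  finally show "(blockmat K rs cs F *\<^sub>v block_vec K cs x) $ p
      = block_vec K rs (\<lambda>k i. \<Sum>k'<K. \<Sum>j<cs k'. F k k' $$ (i, j) * x k' j) $ p"
    using k i p by simp
qed (simp add: blockmat_def)

lemma sum_if_block_row:
  fixes x :: "nat \<Rightarrow> nat \<Rightarrow> 'a :: semiring_0"
  assumes "i < nr"
  shows "(\<Sum>k'<K. \<Sum>j<cs k'. (if P k' then A k' else 0\<^sub>m nr (cs k')) $$ (i, j) * x k' j)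
       = (\<Sum>k'<K. if P k' then \<Sum>j<cs k'. A k' $$ (i, j) * x k' j else 0)"
  using assms by (intro sum.cong refl) auto

section \<open>Quadratic forms\<close>

lemma nonpos_if_linear_le_quadratic:
  fixes a b :: real
  assumes "\<And>t. t * a \<le> t\<^sup>2 * b"
  shows "a \<le> 0"
proof (rule ccontr)
  assume "\<not> a \<le> 0"
  define t where "t = a / (\<bar>b\<bar> + 1)"
  have t: "t > 0" using \<open>\<not> a \<le> 0\<close> by (simp add: t_def add_pos_nonneg)
  have "t * a \<le> t * (t * b)" using assms[of t] by (simp add: power2_eq_square)
  then have "a \<le> t * b" using t by simp
  also have "\<dots> \<le> t * \<bar>b\<bar>" using t by (simp add: abs_ge_self)
  also have "\<dots> < a" using \<open>\<not> a \<le> 0\<close> by (simp add: t_def field_simps)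
  finally show False by simp
qed

lemma quadratic_minimizer_stationary:
  fixes Q :: "real mat"
  assumes Q: "Q \<in> carrier_mat n n" and Q_sym: "transpose_mat Q = Q" and c: "c \<in> carrier_vec n"
    and z: "z \<in> carrier_vec n"
    and min: "\<And>y. y \<in> carrier_vec n \<Longrightarrow>
        1/2 * (z \<bullet> (Q *\<^sub>v z)) - c \<bullet> z \<le> 1/2 * (y \<bullet> (Q *\<^sub>v y)) - c \<bullet> y"
  shows "Q *\<^sub>v z = c"
proof -
  define g where "g = Q *\<^sub>v z - c"
  have g: "g \<in> carrier_vec n" unfolding g_def using Q c z by simp
  have Qg: "Q *\<^sub>v g \<in> carrier_vec n" and Qz: "Q *\<^sub>v z \<in> carrier_vec n" using Q g z by auto
  have gQz: "g \<bullet> (Q *\<^sub>v z) = z \<bullet> (Q *\<^sub>v g)"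
    using transpose_vec_mult_scalar[OF Q g z] Q_sym comm_scalar_prod[OF Qz g] by simp
  have cg: "c \<bullet> g = g \<bullet> c" by (rule comm_scalar_prod[OF c g])
  have gg: "g \<bullet> g = g \<bullet> (Q *\<^sub>v z) - g \<bullet> c"
    using scalar_prod_minus_distrib[OF g Qz c] by (simp only: g_def[symmetric])
  \<comment> \<open>compare the objective at \<open>z\<close> and at \<open>z - t g\<close>\<close>
  have "t * (g \<bullet> g) \<le> t\<^sup>2 * (g \<bullet> (Q *\<^sub>v g) / 2)" for t :: real
  proof -
    have tg: "t \<cdot>\<^sub>v g \<in> carrier_vec n" using g by simp
    have "(z - t \<cdot>\<^sub>v g) \<bullet> (Q *\<^sub>v (z - t \<cdot>\<^sub>v g))
        = z \<bullet> (Q *\<^sub>v z) - 2 * (t * (g \<bullet> (Q *\<^sub>v z))) + t\<^sup>2 * (g \<bullet> (Q *\<^sub>v g))"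
      using Q z g Qz Qg tg gQz
      by (simp add: mult_minus_distrib_mat_vec scalar_prod_minus_distrib minus_scalar_prod_distrib mult_mat_vec[OF Q g]
          power2_eq_square)
    moreover have "c \<bullet> (z - t \<cdot>\<^sub>v g) = c \<bullet> z - t * (c \<bullet> g)"
      using c z tg by (simp add: scalar_prod_minus_distrib)
    moreover have "1/2 * (z \<bullet> (Q *\<^sub>v z)) - c \<bullet> z
        \<le> 1/2 * ((z - t \<cdot>\<^sub>v g) \<bullet> (Q *\<^sub>v (z - t \<cdot>\<^sub>v g))) - c \<bullet> (z - t \<cdot>\<^sub>v g)"
      using min[of "z - t \<cdot>\<^sub>v g"] z g by simp
    ultimately have "t * (g \<bullet> (Q *\<^sub>v z)) - t * (c \<bullet> g) \<le> t\<^sup>2 * (g \<bullet> (Q *\<^sub>v g) / 2)"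
      by linarith
    then show ?thesis using gg cg by (simp add: right_diff_distrib)
  qed
  then have "g \<bullet> g \<le> 0" by (rule nonpos_if_linear_le_quadratic)
  then have "(\<Sum>i<n. (g $ i)\<^sup>2) = 0"
    using g by (intro antisym) (simp_all add: scalar_prod_def atLeast0LessThan power2_eq_square sum_nonneg)
  then have "g $ i = 0" if "i < n" for i
    using that sum_nonneg_eq_0_iff[of "{..<n}" "\<lambda>i. (g $ i)\<^sup>2"] by simp
  then have "(Q *\<^sub>v z) $ i = c $ i" if "i < n" for i using that Q c by (simp add: g_def)
  then show ?thesis using Q c by (intro eq_vecI) simp_all
qed

lemma pos_def_principal_kernel:
  fixes Q :: "real mat"
  assumes Q: "Q \<in> carrier_mat N N"
    and pd: "\<And>x. x \<in> carrier_vec N \<Longrightarrow> x \<noteq> 0\<^sub>v N \<Longrightarrow> x \<bullet> (Q *\<^sub>v x) > 0"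
    and xs: "distinct xs" "set xs \<subseteq> {..<N}"
    and kernel: "\<And>i. i < length xs \<Longrightarrow> (\<Sum>j<length xs. Q $$ (xs ! i, xs ! j) * w j) = 0"
    and j: "j < length xs"
  shows "w j = 0"
proof -
  define y where "y = vec N (\<lambda>b. \<Sum>j<length xs. if xs ! j = b then w j else 0)"
  have y: "y \<in> carrier_vec N" unfolding y_def by simp
  have xs_lt: "xs ! i < N" if "i < length xs" for i using xs(2) nth_mem[OF that] by blast
  have Qy: "(Q *\<^sub>v y) $ a = (\<Sum>j<length xs. Q $$ (a, xs ! j) * w j)" if "a < N" for a
  proof -
    have "(Q *\<^sub>v y) $ a = (\<Sum>b<N. Q $$ (a, b) * (\<Sum>j<length xs. if xs ! j = b then w j else 0))"
      using Q that by (auto simp: y_def scalar_prod_def atLeast0LessThan intro: sum.cong)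
    also have "\<dots> = (\<Sum>j<length xs. Q $$ (a, xs ! j) * w j)"
      using xs(2) by (rule sum_scatter)
    finally show ?thesis .
  qed
  have "y \<bullet> (Q *\<^sub>v y) = (\<Sum>b<N. (Q *\<^sub>v y) $ b * (\<Sum>j<length xs. if xs ! j = b then w j else 0))"
    using Q by (auto simp: y_def scalar_prod_def atLeast0LessThan mult.commute intro: sum.cong)
  also have "\<dots> = (\<Sum>i<length xs. (Q *\<^sub>v y) $ (xs ! i) * w i)"
    using xs(2) by (rule sum_scatter)
  also have "\<dots> = 0"
    by (intro sum.neutral) (simp add: Qy xs_lt kernel)
  finally have y0: "y = 0\<^sub>v N" using pd[OF y] by force
  have "w j = (\<Sum>i<length xs. if i = j then w i else 0)" using j by simp
  also have "\<dots> = y $ (xs ! j)"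
    using xs(1) j xs_lt[OF j] unfolding y_def by (auto simp: nth_eq_iff_index_eq intro: sum.cong)
  also have "\<dots> = 0" using y0 xs_lt[OF j] by simp
  finally show ?thesis .
qed

lemma mat_inverse_of_trivial_kernel:
  fixes A :: "'a :: field mat"
  assumes A: "A \<in> carrier_mat n n"
    and kernel: "\<And>v. v \<in> carrier_vec n \<Longrightarrow> A *\<^sub>v v = 0\<^sub>v n \<Longrightarrow> v = 0\<^sub>v n"
  shows "the (mat_inverse A) \<in> carrier_mat n n" "the (mat_inverse A) * A = 1\<^sub>m n"
proof -
  have "det A \<noteq> 0" using kernel unfolding det_0_iff_vec_prod_zero[OF A] by blast
  then have "A \<in> Units (ring_mat TYPE('a) n ())" by (rule det_non_zero_imp_unit[OF A])
  then obtain B where "mat_inverse A = Some B" using mat_inverse(1)[OF A] by fastforce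
  then show "the (mat_inverse A) \<in> carrier_mat n n" "the (mat_inverse A) * A = 1\<^sub>m n"
    using mat_inverse(2)[OF A] by auto
qed

section \<open>Spectral radius and linear iterations\<close>

lemma pow_mat_smult:
  assumes "(A :: 'a :: comm_ring_1 mat) \<in> carrier_mat n n"
  shows "(a \<cdot>\<^sub>m A) ^\<^sub>m k = a ^ k \<cdot>\<^sub>m A ^\<^sub>m k"
proof (induction k)
  case 0
  show ?case using assms by (intro eq_matI) auto
next
  case (Suc k)
  have "(a \<cdot>\<^sub>m A) ^\<^sub>m Suc k = (a ^ k \<cdot>\<^sub>m A ^\<^sub>m k) * (a \<cdot>\<^sub>m A)" using Suc by simp
  also have "\<dots> = a ^ Suc k \<cdot>\<^sub>m A ^\<^sub>m Suc k"
    using assms by (intro eq_matI) (auto simp: mult_smult_assoc_mat[of _ n n _ n] mult_smult_distrib[of _ n n _ n] ac_simps)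
  finally show ?case .
qed

lemma eigenvalue_smult_mat:
  assumes A: "(A :: 'a :: field mat) \<in> carrier_mat n n" and a: "a \<noteq> 0"
    and ev: "eigenvalue (a \<cdot>\<^sub>m A) \<mu>"
  shows "eigenvalue A (\<mu> / a)"
proof -
  obtain v where v: "v \<in> carrier_vec n" "v \<noteq> 0\<^sub>v n" and Av: "(a \<cdot>\<^sub>m A) *\<^sub>v v = \<mu> \<cdot>\<^sub>v v"
    using ev A unfolding eigenvalue_def eigenvector_def by auto
  have "(a \<cdot>\<^sub>m A) *\<^sub>v v = a \<cdot>\<^sub>v (A *\<^sub>v v)" using A v(1) by (intro eq_vecI) auto
  then have "a \<cdot>\<^sub>v (A *\<^sub>v v) = \<mu> \<cdot>\<^sub>v v" using Av by simp
  then have "(1 / a) \<cdot>\<^sub>v (a \<cdot>\<^sub>v (A *\<^sub>v v)) = (\<mu> / a) \<cdot>\<^sub>v v" by (simp add: smult_smult_assoc)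
  then have "A *\<^sub>v v = (\<mu> / a) \<cdot>\<^sub>v v" using a by (simp add: smult_smult_assoc)
  then show ?thesis unfolding eigenvalue_def eigenvector_def using v A by auto
qed

lemma spectral_radius_smult_lt_1:
  fixes A :: "complex mat"
  assumes A: "A \<in> carrier_mat n n" and n: "n \<noteq> 0" and r: "0 < r" "spectral_radius A < r"
  shows "spectral_radius (complex_of_real (1 / r) \<cdot>\<^sub>m A) < 1"
proof -
  have "complex_of_real (1 / r) \<cdot>\<^sub>m A \<in> carrier_mat n n" using A by simp
  then obtain \<mu> where "\<mu> \<in> spectrum (complex_of_real (1 / r) \<cdot>\<^sub>m A)"
    and \<mu>: "spectral_radius (complex_of_real (1 / r) \<cdot>\<^sub>m A) = cmod \<mu>"
    using spectral_radius_mem_max(1) n by blast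
  then have "eigenvalue A (\<mu> / complex_of_real (1 / r))"
    using r by (intro eigenvalue_smult_mat[OF A]) (auto simp: spectrum_def)
  then have "cmod (\<mu> / complex_of_real (1 / r)) \<le> spectral_radius A"
    using spectral_radius_mem_max(2)[OF A] n unfolding spectrum_def by auto
  then have "cmod \<mu> * r \<le> spectral_radius A" using r by (simp add: norm_divide norm_mult)
  then have "cmod \<mu> * r < 1 * r" using r by linarith
  then show ?thesis using \<mu> r(1) by (simp only: mult_less_cancel_right_pos)
qed

lemma pow_mat_entries_geometric_decay:
  fixes S :: "real mat"
  assumes S: "S \<in> carrier_mat n n"
    and spec: "\<And>\<mu>. eigenvalue (map_mat complex_of_real S) \<mu> \<Longrightarrow> cmod \<mu> < 1"
  obtains C r where "0 < r" "r < 1" "\<And>k i j. i < n \<Longrightarrow> j < n \<Longrightarrow> \<bar>(S ^\<^sub>m k) $$ (i, j)\<bar> \<le> C * r ^ k"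
proof (cases "n = 0")
  case True
  then show ?thesis using that[of "1/2" 0] by simp
next
  case False
  define A where "A = map_mat complex_of_real S"
  have A: "A \<in> carrier_mat n n" unfolding A_def using S by simp
  obtain \<mu>0 where "\<mu>0 \<in> spectrum A" and \<rho>: "spectral_radius A = cmod \<mu>0"
    using spectral_radius_mem_max(1)[OF A] False by auto
  then have \<rho>1: "spectral_radius A < 1" using spec unfolding spectrum_def A_def by simp
  \<comment> \<open>Rescaled by \<open>r\<close> between the spectral radius and 1, the powers stay bounded.\<close>
  define r where "r = (1 + spectral_radius A) / 2"
  have "0 \<le> spectral_radius A" using \<rho> by simp
  then have r: "0 < r" "r < 1" "spectral_radius A < r" using \<rho>1 unfolding r_def by auto
  define A' where "A' = complex_of_real (1 / r) \<cdot>\<^sub>m A"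
  have A': "A' \<in> carrier_mat n n" unfolding A'_def using A by simp
  have "spectral_radius A' < 1"
    unfolding A'_def by (rule spectral_radius_smult_lt_1[OF A False r(1,3)])
  then obtain c where c: "\<And>k. norm_bound (A' ^\<^sub>m k) c"
    using spectral_radius_jnf_norm_bound_less_1_upper_triangular[OF A'] by auto
  have AA': "A = complex_of_real r \<cdot>\<^sub>m A'" unfolding A'_def using A r by (intro eq_matI) auto
  show ?thesis
  proof (rule that[OF r(1,2)])
    fix k i j assume ij: "i < n" "j < n"
    have "complex_of_real ((S ^\<^sub>m k) $$ (i, j)) = (A ^\<^sub>m k) $$ (i, j)"
      using of_real_hom.mat_hom_pow[OF S, of k] S ij unfolding A_def by (metis index_map_mat pow_mat_dim_square S)
    also have "\<dots> = complex_of_real r ^ k * (A' ^\<^sub>m k) $$ (i, j)"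
      unfolding AA' pow_mat_smult[OF A'] using A' ij by simp
    finally have "\<bar>(S ^\<^sub>m k) $$ (i, j)\<bar> = r ^ k * cmod ((A' ^\<^sub>m k) $$ (i, j))"
      using r by (metis norm_mult norm_of_real norm_power abs_of_pos)
    also have "\<dots> \<le> r ^ k * c"
      using c[of k] A' ij r unfolding norm_bound_def by (intro mult_left_mono) auto
    finally show "\<bar>(S ^\<^sub>m k) $$ (i, j)\<bar> \<le> c * r ^ k" by (simp add: mult.commute)
  qed
qed

lemma linear_iteration_tendsto_zero:
  fixes S :: "real mat" and e :: "nat \<Rightarrow> real vec"
  assumes S: "S \<in> carrier_mat n n"
    and spec: "\<And>\<mu>. eigenvalue (map_mat complex_of_real S) \<mu> \<Longrightarrow> cmod \<mu> < 1"
    and e0: "e 0 \<in> carrier_vec n" and step: "\<And>l. e (Suc l) = S *\<^sub>v e l"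
    and p: "p < n"
  shows "(\<lambda>l. e l $ p) \<longlonglongrightarrow> 0"
proof -
  have e: "e l \<in> carrier_vec n" for l
    by (induction l) (use e0 S step in auto)
  have e_pow: "e (l + m) = S ^\<^sub>m l *\<^sub>v e m" for l m
  proof (induction l arbitrary: m)
    case 0
    show ?case using S e[of m] by simp
  next
    case (Suc l)
    have "e (Suc l + m) = S ^\<^sub>m l *\<^sub>v (S *\<^sub>v e m)" using Suc[of "Suc m"] step by simp
    also have "\<dots> = S ^\<^sub>m Suc l *\<^sub>v e m" using S e[of m] by (simp add: assoc_mult_mat_vec[of _ n n _ n])
    finally show ?case .
  qed
  obtain C r where r: "0 < r" "r < 1"
    and decay: "\<And>k i j. i < n \<Longrightarrow> j < n \<Longrightarrow> \<bar>(S ^\<^sub>m k) $$ (i, j)\<bar> \<le> C * r ^ k"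
    using pow_mat_entries_geometric_decay[OF S spec] by metis
  define D where "D = C * (\<Sum>q<n. \<bar>e 0 $ q\<bar>)"
  have bound: "norm (e l $ p) \<le> D * r ^ l" for l
  proof -
    have "norm (e l $ p) = \<bar>\<Sum>q<n. (S ^\<^sub>m l) $$ (p, q) * e 0 $ q\<bar>"
      using p S e[of 0] e_pow[of l 0] by (simp add: scalar_prod_def atLeast0LessThan)
    also have "\<dots> \<le> (\<Sum>q<n. \<bar>(S ^\<^sub>m l) $$ (p, q)\<bar> * \<bar>e 0 $ q\<bar>)"
      by (simp add: abs_mult[symmetric] sum_abs)
    also have "\<dots> \<le> (\<Sum>q<n. C * r ^ l * \<bar>e 0 $ q\<bar>)"
      using decay p by (intro sum_mono mult_right_mono) auto
    also have "\<dots> = D * r ^ l" unfolding D_def by (simp add: sum_distrib_left ac_simps)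
    finally show ?thesis .
  qed
  have "(\<lambda>l. r ^ l) \<longlonglongrightarrow> 0" using r by (intro LIMSEQ_power_zero) simp
  then have "(\<lambda>l. D * r ^ l) \<longlonglongrightarrow> D * 0" by (rule tendsto_mult_left)
  then have "(\<lambda>l. D * r ^ l) \<longlonglongrightarrow> 0" by simp
  moreover have "\<forall>\<^sub>F l in sequentially. norm (e l $ p) \<le> D * r ^ l"
    using bound by (intro always_eventually allI)
  ultimately show ?thesis by (metis Lim_null_comparison)
qed

lemma splitting_iteration_tendsto:
  fixes L R B :: "real mat" and x :: "nat \<Rightarrow> real vec"
  assumes L: "L \<in> carrier_mat n n" and R: "R \<in> carrier_mat n n" and B: "B \<in> carrier_mat n n"
    and BL: "B * L = 1\<^sub>m n"
    and spec: "\<And>\<mu>. eigenvalue (map_mat complex_of_real (B * R)) \<mu> \<Longrightarrow> cmod \<mu> < 1"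
    and x: "\<And>l. x l \<in> carrier_vec n" and xs: "xs \<in> carrier_vec n" and b: "b \<in> carrier_vec n"
    and step: "\<And>l. L *\<^sub>v x (Suc l) = b + R *\<^sub>v x l" and fixed: "L *\<^sub>v xs = b + R *\<^sub>v xs"
    and p: "p < n"
  shows "(\<lambda>l. x l $ p) \<longlonglongrightarrow> xs $ p"
proof -
  define e where "e l = x l - xs" for l
  have e: "e l \<in> carrier_vec n" for l unfolding e_def using x xs by simp
  have Le: "L *\<^sub>v e (Suc l) = R *\<^sub>v e l" for l
  proof -
    have "L *\<^sub>v e (Suc l) = (b + R *\<^sub>v x l) - (b + R *\<^sub>v xs)"
      unfolding e_def mult_minus_distrib_mat_vec[OF L x xs] step fixed ..
    also have "\<dots> = R *\<^sub>v x l - R *\<^sub>v xs" using b R x xs by (intro eq_vecI) auto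
    also have "\<dots> = R *\<^sub>v e l" unfolding e_def by (rule mult_minus_distrib_mat_vec[OF R x xs, symmetric])
    finally show ?thesis .
  qed
  have "e (Suc l) = (B * R) *\<^sub>v e l" for l
  proof -
    have "e (Suc l) = (B * L) *\<^sub>v e (Suc l)" using BL e by simp
    also have "\<dots> = B *\<^sub>v (R *\<^sub>v e l)" unfolding assoc_mult_mat_vec[OF B L e] Le ..
    also have "\<dots> = (B * R) *\<^sub>v e l" by (rule assoc_mult_mat_vec[OF B R e, symmetric])
    finally show ?thesis .
  qed
  then have "(\<lambda>l. e l $ p) \<longlonglongrightarrow> 0"
    using B R e p spec by (intro linear_iteration_tendsto_zero[of "B * R" n]) auto
  then have "(\<lambda>l. e l $ p + xs $ p) \<longlonglongrightarrow> 0 + xs $ p" by (intro tendsto_add tendsto_const)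
  moreover have "e l $ p + xs $ p = x l $ p" for l unfolding e_def using x xs p by simp
  ultimately show ?thesis by simp
qed

section \<open>The lifted problem\<close>

locale lifted_qp =
  fixes N K :: nat and Q :: "real mat" and c :: "real vec"
    and Ns :: "nat \<Rightarrow> nat set" and own dup :: "nat \<Rightarrow> nat list"
  assumes Q_carrier: "Q \<in> carrier_mat N N" and Q_sym: "transpose_mat Q = Q"
    and Q_pos_def: "\<And>x. x \<in> carrier_vec N \<Longrightarrow> x \<noteq> 0\<^sub>v N \<Longrightarrow> x \<bullet> (Q *\<^sub>v x) > 0"
    and part_disj: "\<And>k k'. k < K \<Longrightarrow> k' < K \<Longrightarrow> k \<noteq> k' \<Longrightarrow> Ns k \<inter> Ns k' = {}"
    and part_cover: "(\<Union>k<K. Ns k) = {..<N}"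
    and own_enum: "\<And>k. k < K \<Longrightarrow> distinct (own k) \<and> set (own k) = Ns k"
    and dup_enum: "\<And>k. k < K \<Longrightarrow> distinct (dup k) \<and> set (dup k) = dupset Q N Ns k"
begin

abbreviation "zsz \<equiv> lenk own dup"
abbreviation "osz k \<equiv> length (own k)"
abbreviation "lsz k \<equiv> length (dup k)"
abbreviation "Qk \<equiv> Qloc Q Ns own dup"
abbreviation "Pm \<equiv> PiM own dup"
abbreviation "L \<equiv> Lmat Q Ns K own dup"
abbreviation "R \<equiv> Rmat K own dup"
abbreviation "nlift \<equiv> off zsz K + off lsz K"

lemma PiM_carrier: "Pm k k' \<in> carrier_mat (lsz k) (zsz k')"
  unfolding PiM_def lenk_def by auto

lemma dim_PiM [simp]: "dim_row (Pm k k') = lsz k" "dim_col (Pm k k') = zsz k'"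
  using PiM_carrier by auto

lemma Lmat_carrier: "L \<in> carrier_mat nlift nlift"
  unfolding Lmat_def Let_def by (simp add: blockmat_carrier)

lemma Rmat_carrier: "R \<in> carrier_mat nlift nlift"
  unfolding Rmat_def Let_def by (simp add: blockmat_carrier)

lemma zsz_eq: "zsz k = osz k + lsz k"
  unfolding lenk_def ..

lemma nbar_own [simp]: "j < osz k \<Longrightarrow> nbar own dup k ! j = own k ! j"
  unfolding nbar_def by (simp add: nth_append)

lemma nbar_dup [simp]: "nbar own dup k ! (osz k + r) = dup k ! r"
  unfolding nbar_def by (simp add: nth_append)

lemma Ns_subset: "k < K \<Longrightarrow> Ns k \<subseteq> {..<N}"
  using part_cover by auto

lemma finite_Ns [simp]: "k < K \<Longrightarrow> finite (Ns k)"
  using Ns_subset finite_subset by blast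

lemma dupset_iff: "b \<in> dupset Q N Ns k \<longleftrightarrow> b < N \<and> b \<notin> Ns k \<and> (\<exists>a\<in>Ns k. Q $$ (a, b) \<noteq> 0)"
  unfolding dupset_def by auto

lemma finite_dupset [simp]: "finite (dupset Q N Ns k)"
  by (rule finite_subset[of _ "{..<N}"]) (auto simp: dupset_iff)

lemma own_nth_mem: "k < K \<Longrightarrow> j < osz k \<Longrightarrow> own k ! j \<in> Ns k"
  using own_enum nth_mem by blast

lemma dup_nth_mem: "k < K \<Longrightarrow> r < lsz k \<Longrightarrow> dup k ! r \<in> dupset Q N Ns k"
  using dup_enum nth_mem by blast

lemma owner_unique: "k < K \<Longrightarrow> k' < K \<Longrightarrow> a \<in> Ns k \<Longrightarrow> a \<in> Ns k' \<Longrightarrow> k = k'"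
  using part_disj by blast

lemma Q_sym_entry: "a < N \<Longrightarrow> b < N \<Longrightarrow> Q $$ (a, b) = Q $$ (b, a)"
  using Q_sym Q_carrier by (metis carrier_matD index_transpose_mat(1))

lemma coupling_zero:
  assumes "a \<in> Ns k" "b < N" "b \<notin> Ns k" "b \<notin> dupset Q N Ns k"
  shows "Q $$ (a, b) = 0"
  using assms unfolding dupset_iff by blast

lemma sum_nbar:
  assumes "k < K"
  shows "(\<Sum>j<zsz k. F (nbar own dup k ! j)) = (\<Sum>x\<in>Ns k \<union> dupset Q N Ns k. F x)"
proof -
  have "Ns k \<inter> dupset Q N Ns k = {}" by (auto simp: dupset_iff)
  then have "distinct (nbar own dup k)" "set (nbar own dup k) = Ns k \<union> dupset Q N Ns k"
    using own_enum[OF assms] dup_enum[OF assms] unfolding nbar_def by auto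
  moreover have "length (nbar own dup k) = zsz k" unfolding nbar_def lenk_def by simp
  ultimately show ?thesis using sum_distinct_nth[of "nbar own dup k" F] by simp
qed

lemma sum_dup: "k < K \<Longrightarrow> (\<Sum>r<lsz k. F (dup k ! r)) = (\<Sum>x\<in>dupset Q N Ns k. F x)"
  using sum_distinct_nth[of "dup k" F] dup_enum[of k] by simp

lemma sum_partition: "(\<Sum>b<N. g b) = (\<Sum>k<K. \<Sum>b\<in>Ns k. (g b :: real))"
proof -
  have "(\<Sum>b<N. g b) = sum g (\<Union>k<K. Ns k)" using part_cover by simp
  also have "\<dots> = (\<Sum>k<K. sum g (Ns k))"
    by (rule sum.UNION_disjoint) (use part_disj in auto)
  finally show ?thesis .
qed

lemma PiM_diag: "r < lsz k \<Longrightarrow> j < zsz k \<Longrightarrow> Pm k k $$ (r, j) = (if j = osz k + r then 1 else 0)"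
  unfolding PiM_def by simp

lemma PiM_off: "k \<noteq> k' \<Longrightarrow> r < lsz k \<Longrightarrow> j < zsz k' \<Longrightarrow>
    Pm k k' $$ (r, j) = (if j < osz k' \<and> own k' ! j = dup k ! r then -1 else 0)"
  unfolding PiM_def by simp

lemma Qloc_index: "i < zsz k \<Longrightarrow> j < zsz k \<Longrightarrow> Qk k $$ (i, j) =
   (let a = nbar own dup k ! i; b = nbar own dup k ! j in
     if a \<in> Ns k \<and> b \<in> Ns k then Q $$ (a, b)
     else if a \<in> Ns k \<or> b \<in> Ns k then Q $$ (a, b) / 2 else 0)"
  unfolding Qloc_def by simp

lemma PiM_diag_row_sum:
  assumes "r < lsz k"
  shows "(\<Sum>j<zsz k. Pm k k $$ (r, j) * v j) = v (osz k + r)"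
proof -
  have "(\<Sum>j<zsz k. Pm k k $$ (r, j) * v j) = (\<Sum>j<zsz k. if j = osz k + r then v j else 0)"
    using assms by (intro sum.cong refl) (simp add: PiM_diag)
  also have "\<dots> = v (osz k + r)" using assms by (simp add: zsz_eq)
  finally show ?thesis .
qed

lemma PiM_diag_col_sum:
  assumes "i < zsz k"
  shows "(\<Sum>r<lsz k. Pm k k $$ (r, i) * w r) = (if i < osz k then 0 else w (i - osz k))"
proof -
  have "(\<Sum>r<lsz k. Pm k k $$ (r, i) * w r) = (\<Sum>r<lsz k. if r = i - osz k \<and> osz k \<le> i then w r else 0)"
    using assms by (intro sum.cong refl) (auto simp: PiM_diag)
  also have "\<dots> = (if i < osz k then 0 else w (i - osz k))"
    using assms by (auto simp: zsz_eq)
  finally show ?thesis .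
qed

lemma PiM_off_row_sum:
  assumes k': "k \<noteq> k'" "k' < K" and r: "r < lsz k"
  shows "(\<Sum>j<zsz k'. Pm k k' $$ (r, j) * g (nbar own dup k' ! j))
    = (if dup k ! r \<in> Ns k' then - g (dup k ! r) else 0)"
proof -
  have "(\<Sum>j<osz k'. Pm k k' $$ (r, j) * g (nbar own dup k' ! j))
      = (\<Sum>j<osz k'. if own k' ! j = dup k ! r then - g (own k' ! j) else 0)"
    using k' r by (intro sum.cong refl) (simp add: PiM_off zsz_eq)
  moreover have "(\<Sum>q<lsz k'. Pm k k' $$ (r, osz k' + q) * g (nbar own dup k' ! (osz k' + q))) = 0"
    using k' r by (intro sum.neutral ballI) (simp add: PiM_off zsz_eq)
  ultimately have "(\<Sum>j<zsz k'. Pm k k' $$ (r, j) * g (nbar own dup k' ! j))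
      = (\<Sum>j<osz k'. if own k' ! j = dup k ! r then - g (own k' ! j) else 0)"
    unfolding zsz_eq sum_lessThan_add by simp
  also have "\<dots> = (\<Sum>x\<in>Ns k'. if x = dup k ! r then - g x else 0)"
    using sum_distinct_nth[of "own k'"] own_enum[OF k'(2)] by simp
  also have "\<dots> = (if dup k ! r \<in> Ns k' then - g (dup k ! r) else 0)"
    using k' by (simp add: sum.delta')
  finally show ?thesis .
qed

lemma PiM_off_col_sum:
  assumes k': "k \<noteq> k'" "k' < K" and i: "i < zsz k"
  shows "(\<Sum>r<lsz k'. Pm k' k $$ (r, i) * w (dup k' ! r))
    = (if i < osz k \<and> own k ! i \<in> dupset Q N Ns k' then - w (own k ! i) else 0)"
proof -
  have "(\<Sum>r<lsz k'. Pm k' k $$ (r, i) * w (dup k' ! r))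
      = (\<Sum>r<lsz k'. if i < osz k \<and> dup k' ! r = own k ! i then - w (dup k' ! r) else 0)"
    using k' i by (intro sum.cong refl) (auto simp: PiM_off)
  also have "\<dots> = (\<Sum>x\<in>dupset Q N Ns k'. if i < osz k \<and> x = own k ! i then - w x else 0)"
    by (rule sum_dup[OF k'(2)])
  also have "\<dots> = (if i < osz k \<and> own k ! i \<in> dupset Q N Ns k' then - w (own k ! i) else 0)"
    by (cases "i < osz k") (simp_all add: sum.delta')
  finally show ?thesis .
qed

definition lifted_vec :: "(nat \<Rightarrow> nat \<Rightarrow> real) \<Rightarrow> (nat \<Rightarrow> nat \<Rightarrow> real) \<Rightarrow> real vec" where
  "lifted_vec z y = block_vec K zsz z @\<^sub>v block_vec K lsz y"

lemma lifted_vec_carrier [simp]: "lifted_vec z y \<in> carrier_vec nlift"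
  unfolding lifted_vec_def by simp

lemma index_lifted_vec_z [simp]: "k < K \<Longrightarrow> i < zsz k \<Longrightarrow> lifted_vec z y $ (off zsz k + i) = z k i"
  unfolding lifted_vec_def using off_add_less[of k K i zsz] by simp

lemma lifted_vec_zero: "lifted_vec (\<lambda>k j. 0) (\<lambda>k r. 0) = 0\<^sub>v nlift"
  unfolding lifted_vec_def zero_append_vec zero_block_vec ..

lemma lifted_vec_cases:
  assumes "v \<in> carrier_vec nlift"
  obtains z y where "v = lifted_vec z y"
proof
  show "v = lifted_vec (\<lambda>k j. vec_first v (off zsz K) $ (off zsz k + j)) (\<lambda>k r. vec_last v (off lsz K) $ (off lsz k + r))"
    unfolding lifted_vec_def
    by (simp add: block_vec_of_vec[symmetric] vec_first_last_append[OF assms])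
qed

lemma Lmat_mult_lifted_vec:
  "L *\<^sub>v lifted_vec z y =
     block_vec K zsz (\<lambda>k i. (\<Sum>j<zsz k. Qk k $$ (i, j) * z k j)
        + (\<Sum>k'<k. \<Sum>r<lsz k'. Pm k' k $$ (r, i) * y k' r) + (\<Sum>r<lsz k. Pm k k $$ (r, i) * y k r))
     @\<^sub>v block_vec K lsz (\<lambda>k r. (\<Sum>k'<k. \<Sum>j<zsz k'. Pm k k' $$ (r, j) * z k' j)
        + (\<Sum>j<zsz k. Pm k k $$ (r, j) * z k j))" (is "_ = ?rhs")
proof -
  have "L *\<^sub>v lifted_vec z y =
     block_vec K zsz (\<lambda>k i. (\<Sum>k'<K. \<Sum>j<zsz k'. (if k = k' then Qk k else 0\<^sub>m (zsz k) (zsz k')) $$ (i, j) * z k' j)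
        + (\<Sum>k'<K. \<Sum>r<lsz k'. (if k' \<le> k then transpose_mat (Pm k' k) else 0\<^sub>m (zsz k) (lsz k')) $$ (i, r) * y k' r))
     @\<^sub>v block_vec K lsz (\<lambda>k r. \<Sum>k'<K. \<Sum>j<zsz k'. (if k' \<le> k then Pm k k' else 0\<^sub>m (lsz k) (zsz k')) $$ (r, j) * z k' j)"
    unfolding Lmat_def Let_def lifted_vec_def
    by (subst four_block_mat_mult_vec[OF blockmat_carrier blockmat_carrier blockmat_carrier zero_carrier_mat])
      (simp_all add: blockmat_mult_block_vec add_block_vec zero_mat_mult_vec)
  also have "\<dots> = ?rhs"
  proof (intro arg_cong2[where f = append_vec] block_vec_cong)
    fix k i assume k: "k < K" and i: "i < zsz k"
    show "(\<Sum>k'<K. \<Sum>j<zsz k'. (if k = k' then Qk k else 0\<^sub>m (zsz k) (zsz k')) $$ (i, j) * z k' j)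
        + (\<Sum>k'<K. \<Sum>r<lsz k'. (if k' \<le> k then transpose_mat (Pm k' k) else 0\<^sub>m (zsz k) (lsz k')) $$ (i, r) * y k' r)
      = (\<Sum>j<zsz k. Qk k $$ (i, j) * z k j)
        + (\<Sum>k'<k. \<Sum>r<lsz k'. Pm k' k $$ (r, i) * y k' r) + (\<Sum>r<lsz k. Pm k k $$ (r, i) * y k r)"
      using k i by (simp add: sum_if_block_row[where nr = "zsz k"] sum_if_le_split[OF k] sum.delta)
  next
    fix k r assume k: "k < K" and r: "r < lsz k"
    show "(\<Sum>k'<K. \<Sum>j<zsz k'. (if k' \<le> k then Pm k k' else 0\<^sub>m (lsz k) (zsz k')) $$ (r, j) * z k' j)
      = (\<Sum>k'<k. \<Sum>j<zsz k'. Pm k k' $$ (r, j) * z k' j) + (\<Sum>j<zsz k. Pm k k $$ (r, j) * z k j)"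
      using k r by (simp add: sum_if_block_row[where nr = "lsz k"] sum_if_le_split[OF k])
  qed
  finally show ?thesis .
qed

lemma Rmat_mult_lifted_vec:
  "R *\<^sub>v lifted_vec z y =
     block_vec K zsz (\<lambda>k i. - (\<Sum>k'\<in>{k<..<K}. \<Sum>r<lsz k'. Pm k' k $$ (r, i) * y k' r))
     @\<^sub>v block_vec K lsz (\<lambda>k r. - (\<Sum>k'\<in>{k<..<K}. \<Sum>j<zsz k'. Pm k k' $$ (r, j) * z k' j))"
  (is "_ = ?rhs")
proof -
  have "R *\<^sub>v lifted_vec z y =
     block_vec K zsz (\<lambda>k i. \<Sum>k'<K. \<Sum>r<lsz k'. (if k < k' then - transpose_mat (Pm k' k) else 0\<^sub>m (zsz k) (lsz k')) $$ (i, r) * y k' r)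
     @\<^sub>v block_vec K lsz (\<lambda>k r. \<Sum>k'<K. \<Sum>j<zsz k'. (if k < k' then - Pm k k' else 0\<^sub>m (lsz k) (zsz k')) $$ (r, j) * z k' j)"
    unfolding Rmat_def Let_def lifted_vec_def
    by (subst four_block_mat_mult_vec[OF zero_carrier_mat blockmat_carrier blockmat_carrier zero_carrier_mat])
      (simp_all add: blockmat_mult_block_vec zero_mat_mult_vec)
  also have "\<dots> = ?rhs"
  proof (intro arg_cong2[where f = append_vec] block_vec_cong)
    fix k i assume k: "k < K" and i: "i < zsz k"
    show "(\<Sum>k'<K. \<Sum>r<lsz k'. (if k < k' then - transpose_mat (Pm k' k) else 0\<^sub>m (zsz k) (lsz k')) $$ (i, r) * y k' r)
      = - (\<Sum>k'\<in>{k<..<K}. \<Sum>r<lsz k'. Pm k' k $$ (r, i) * y k' r)"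
      using i by (simp add: sum_if_block_row[where nr = "zsz k"] sum_if_gt sum_negf)
  next
    fix k r assume k: "k < K" and r: "r < lsz k"
    show "(\<Sum>k'<K. \<Sum>j<zsz k'. (if k < k' then - Pm k k' else 0\<^sub>m (lsz k) (zsz k')) $$ (r, j) * z k' j)
      = - (\<Sum>k'\<in>{k<..<K}. \<Sum>j<zsz k'. Pm k k' $$ (r, j) * z k' j)"
      using r by (simp add: sum_if_block_row[where nr = "lsz k"] sum_if_gt sum_negf)
  qed
  finally show ?thesis .
qed

definition lifted_rhs :: "real vec" where
  "lifted_rhs = lifted_vec (\<lambda>k i. cloc c Ns own dup k $ i) (\<lambda>k r. 0)"

lemma sweep_matrix_form:
  assumes sweep_z: "\<And>k i. k < K \<Longrightarrow> i < zsz k \<Longrightarrow>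
        (\<Sum>j<zsz k. Qk k $$ (i, j) * z1 k j) + (\<Sum>r<lsz k. Pm k k $$ (r, i) * y1 k r)
        = cloc c Ns own dup k $ i
          - (\<Sum>k'<k. \<Sum>r<lsz k'. Pm k' k $$ (r, i) * y1 k' r)
          - (\<Sum>k'\<in>{k<..<K}. \<Sum>r<lsz k'. Pm k' k $$ (r, i) * y0 k' r)"
    and sweep_y: "\<And>k r. k < K \<Longrightarrow> r < lsz k \<Longrightarrow>
        (\<Sum>j<zsz k. Pm k k $$ (r, j) * z1 k j)
        = - (\<Sum>k'<k. \<Sum>j<zsz k'. Pm k k' $$ (r, j) * z1 k' j)
          - (\<Sum>k'\<in>{k<..<K}. \<Sum>j<zsz k'. Pm k k' $$ (r, j) * z0 k' j)"
  shows "L *\<^sub>v lifted_vec z1 y1 = lifted_rhs + R *\<^sub>v lifted_vec z0 y0"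
  unfolding Lmat_mult_lifted_vec Rmat_mult_lifted_vec unfolding lifted_rhs_def lifted_vec_def
proof (subst append_vec_add[OF block_vec_carrier block_vec_carrier block_vec_carrier block_vec_carrier],
    unfold add_block_vec, intro arg_cong2[where f = append_vec] block_vec_cong)
  fix k i assume "k < K" "i < zsz k"
  then show "(\<Sum>j<zsz k. Qk k $$ (i, j) * z1 k j) + (\<Sum>k'<k. \<Sum>r<lsz k'. Pm k' k $$ (r, i) * y1 k' r)
      + (\<Sum>r<lsz k. Pm k k $$ (r, i) * y1 k r)
    = cloc c Ns own dup k $ i + - (\<Sum>k'\<in>{k<..<K}. \<Sum>r<lsz k'. Pm k' k $$ (r, i) * y0 k' r)"
    using sweep_z by fastforce
next
  fix k r assume "k < K" "r < lsz k"
  then show "(\<Sum>k'<k. \<Sum>j<zsz k'. Pm k k' $$ (r, j) * z1 k' j) + (\<Sum>j<zsz k. Pm k k $$ (r, j) * z1 k j)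
    = 0 + - (\<Sum>k'\<in>{k<..<K}. \<Sum>j<zsz k'. Pm k k' $$ (r, j) * z0 k' j)"
    using sweep_y by fastforce
qed

lemma kkt_matrix_form:
  assumes kkt_z: "\<And>k i. k < K \<Longrightarrow> i < zsz k \<Longrightarrow>
        (\<Sum>j<zsz k. Qk k $$ (i, j) * z k j) + (\<Sum>k'<K. \<Sum>r<lsz k'. Pm k' k $$ (r, i) * y k' r)
        = cloc c Ns own dup k $ i"
    and kkt_y: "\<And>k r. k < K \<Longrightarrow> r < lsz k \<Longrightarrow>
        (\<Sum>k'<K. \<Sum>j<zsz k'. Pm k k' $$ (r, j) * z k' j) = 0"
  shows "L *\<^sub>v lifted_vec z y = lifted_rhs + R *\<^sub>v lifted_vec z y"
proof (rule sweep_matrix_form)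
  fix k i assume k: "k < K" and i: "i < zsz k"
  show "(\<Sum>j<zsz k. Qk k $$ (i, j) * z k j) + (\<Sum>r<lsz k. Pm k k $$ (r, i) * y k r)
        = cloc c Ns own dup k $ i
          - (\<Sum>k'<k. \<Sum>r<lsz k'. Pm k' k $$ (r, i) * y k' r)
          - (\<Sum>k'\<in>{k<..<K}. \<Sum>r<lsz k'. Pm k' k $$ (r, i) * y k' r)"
    using kkt_z[OF k i] sum_lessThan_split_at[OF k, of "\<lambda>k'. \<Sum>r<lsz k'. Pm k' k $$ (r, i) * y k' r"]
    by linarith
next
  fix k r assume k: "k < K" and r: "r < lsz k"
  show "(\<Sum>j<zsz k. Pm k k $$ (r, j) * z k j)
        = - (\<Sum>k'<k. \<Sum>j<zsz k'. Pm k k' $$ (r, j) * z k' j)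
          - (\<Sum>k'\<in>{k<..<K}. \<Sum>j<zsz k'. Pm k k' $$ (r, j) * z k' j)"
    using kkt_y[OF k r] sum_lessThan_split_at[OF k, of "\<lambda>k'. \<Sum>j<zsz k'. Pm k k' $$ (r, j) * z k' j"]
    by linarith
qed

lemma lifted_consensus:
  assumes k: "k < K" and r: "r < lsz k"
  shows "(\<Sum>k'<K. \<Sum>j<zsz k'. Pm k k' $$ (r, j) * g (nbar own dup k' ! j)) = 0"
proof -
  define a where "a = dup k ! r"
  have "a \<in> dupset Q N Ns k" unfolding a_def by (rule dup_nth_mem[OF k r])
  then have "a < N" "a \<notin> Ns k" by (simp_all add: dupset_iff)
  then obtain k0 where k0: "k0 < K" "a \<in> Ns k0" "k0 \<noteq> k" using part_cover by blast
  have "(\<Sum>j<zsz k'. Pm k k' $$ (r, j) * g (nbar own dup k' ! j))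
      = (if k' = k then g a else 0) + (if k' = k0 then - g a else 0)" if k': "k' < K" for k'
  proof (cases "k' = k")
    case True
    then show ?thesis using r k0 by (simp add: PiM_diag_row_sum a_def)
  next
    case False
    have "a \<in> Ns k' \<longleftrightarrow> k' = k0" using k0 k' owner_unique by blast
    then show ?thesis using False k' r by (simp add: PiM_off_row_sum a_def)
  qed
  then have "(\<Sum>k'<K. \<Sum>j<zsz k'. Pm k k' $$ (r, j) * g (nbar own dup k' ! j))
      = (\<Sum>k'<K. (if k' = k then g a else 0) + (if k' = k0 then - g a else 0))"
    by (intro sum.cong) auto
  also have "\<dots> = 0" using k k0 by (simp add: sum.distrib)
  finally show ?thesis .
qed

text \<open>A coupling \<open>Q\<^sub>a\<^sub>b\<close> with \<open>a\<close> owned by \<open>k'\<close> and \<open>b\<close> owned by \<open>k\<close> is split in halves between \<open>Q\<^sub>k\<^sub>'\<close> and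
  \<open>Q\<^sub>k\<close>; the multiplier of the copy of \<open>a\<close> in partition \<open>k\<close> restores the half missing from the
  gradient of the owner \<open>k'\<close>.\<close>

definition copy_multiplier :: "real vec \<Rightarrow> nat \<Rightarrow> nat \<Rightarrow> real" where
  "copy_multiplier z k a = - (\<Sum>b\<in>Ns k. Q $$ (a, b) * z $ b) / 2"

lemma Qloc_own_row_sum:
  assumes k: "k < K" and i: "i < osz k"
  shows "(\<Sum>j<zsz k. Qk k $$ (i, j) * g (nbar own dup k ! j))
    = (\<Sum>b<N. if b \<in> Ns k then Q $$ (own k ! i, b) * g b else Q $$ (own k ! i, b) * g b / 2)"
proof -
  define a where "a = own k ! i"
  have a: "a \<in> Ns k" unfolding a_def by (rule own_nth_mem[OF k i])
  define h where "h b = (if b \<in> Ns k then Q $$ (a, b) * g b else Q $$ (a, b) * g b / 2)" for b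
  have "(\<Sum>j<zsz k. Qk k $$ (i, j) * g (nbar own dup k ! j)) = (\<Sum>j<zsz k. h (nbar own dup k ! j))"
    using i a by (intro sum.cong refl) (simp add: Qloc_index zsz_eq a_def h_def)
  also have "\<dots> = (\<Sum>b\<in>Ns k \<union> dupset Q N Ns k. h b)"
    by (rule sum_nbar[OF k])
  also have "\<dots> = (\<Sum>b<N. h b)"
  proof (rule sum.mono_neutral_left)
    show "Ns k \<union> dupset Q N Ns k \<subseteq> {..<N}" using Ns_subset[OF k] by (auto simp: dupset_iff)
    show "\<forall>b\<in>{..<N} - (Ns k \<union> dupset Q N Ns k). h b = 0"
      using coupling_zero[OF a] by (auto simp: h_def)
  qed simp
  finally show ?thesis unfolding h_def a_def .
qed

lemma Qloc_dup_row_sum: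
  assumes k: "k < K" and r: "r < lsz k"
  shows "(\<Sum>j<zsz k. Qk k $$ (osz k + r, j) * g (nbar own dup k ! j))
    = (\<Sum>b\<in>Ns k. Q $$ (dup k ! r, b) * g b) / 2"
proof -
  define a where "a = dup k ! r"
  have a: "a \<notin> Ns k" using dup_nth_mem[OF k r] unfolding a_def dupset_iff by simp
  define h where "h b = (if b \<in> Ns k then Q $$ (a, b) * g b / 2 else 0)" for b
  have "(\<Sum>j<zsz k. Qk k $$ (osz k + r, j) * g (nbar own dup k ! j)) = (\<Sum>j<zsz k. h (nbar own dup k ! j))"
    using r a by (intro sum.cong refl) (simp add: Qloc_index zsz_eq a_def h_def)
  also have "\<dots> = (\<Sum>b\<in>Ns k \<union> dupset Q N Ns k. h b)"
    by (rule sum_nbar[OF k])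
  also have "\<dots> = (\<Sum>b\<in>Ns k. Q $$ (a, b) * g b / 2)"
    by (rule sum.mono_neutral_cong_right) (use k in \<open>auto simp: h_def\<close>)
  finally show ?thesis unfolding a_def by (simp add: sum_divide_distrib)
qed

lemma multiplier_own_col_sum:
  assumes k: "k < K" and i: "i < osz k"
  shows "(\<Sum>k'<K. \<Sum>r<lsz k'. Pm k' k $$ (r, i) * copy_multiplier z k' (dup k' ! r))
    = (\<Sum>b<N. if b \<in> Ns k then 0 else Q $$ (own k ! i, b) * z $ b / 2)"
proof -
  define a where "a = own k ! i"
  have a: "a \<in> Ns k" "a < N" unfolding a_def using own_nth_mem[OF k i] Ns_subset[OF k] by auto
  define h where "h b = (if b \<in> Ns k then 0 else Q $$ (a, b) * z $ b / 2)" for b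
  have col: "(\<Sum>r<lsz k'. Pm k' k $$ (r, i) * copy_multiplier z k' (dup k' ! r)) = (\<Sum>b\<in>Ns k'. h b)"
    if k': "k' < K" for k'
  proof (cases "k' = k")
    case True
    then show ?thesis using i by (simp add: PiM_diag_col_sum zsz_eq h_def)
  next
    case False
    have disj: "b \<notin> Ns k" if "b \<in> Ns k'" for b using False a k k' that owner_unique by blast
    have a': "a \<notin> Ns k'" using disj a by blast
    have "(\<Sum>r<lsz k'. Pm k' k $$ (r, i) * copy_multiplier z k' (dup k' ! r))
        = (if a \<in> dupset Q N Ns k' then (\<Sum>b\<in>Ns k'. Q $$ (a, b) * z $ b / 2) else 0)"
      using PiM_off_col_sum[of k k' i "copy_multiplier z k'"] False k' i
      by (simp add: zsz_eq a_def copy_multiplier_def sum_divide_distrib)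
    also have "\<dots> = (\<Sum>b\<in>Ns k'. h b)"
    proof (cases "a \<in> dupset Q N Ns k'")
      case True
      then show ?thesis using disj by (simp add: h_def)
    next
      case False
      have "Q $$ (a, b) = 0" if "b \<in> Ns k'" for b
        using False a a' that Ns_subset[OF k'] Q_sym_entry[of a b] unfolding dupset_iff by auto
      then show ?thesis using False disj by (simp add: h_def)
    qed
    finally show ?thesis .
  qed
  have "(\<Sum>k'<K. \<Sum>r<lsz k'. Pm k' k $$ (r, i) * copy_multiplier z k' (dup k' ! r))
      = (\<Sum>k'<K. \<Sum>b\<in>Ns k'. h b)" by (rule sum.cong[OF refl]) (simp add: col)
  also have "\<dots> = (\<Sum>b<N. h b)" by (rule sum_partition[symmetric])
  finally show ?thesis unfolding h_def a_def .
qed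

lemma lifted_stationarity:
  assumes grad: "Q *\<^sub>v z = c" and z: "z \<in> carrier_vec N"
    and k: "k < K" and i: "i < zsz k"
  shows "(\<Sum>j<zsz k. Qk k $$ (i, j) * z $ (nbar own dup k ! j))
    + (\<Sum>k'<K. \<Sum>r<lsz k'. Pm k' k $$ (r, i) * copy_multiplier z k' (dup k' ! r))
    = cloc c Ns own dup k $ i"
proof (cases "i < osz k")
  case True
  define a where "a = own k ! i"
  have a: "a \<in> Ns k" "a < N" unfolding a_def using own_nth_mem[OF k True] Ns_subset[OF k] by auto
  have "(\<Sum>j<zsz k. Qk k $$ (i, j) * z $ (nbar own dup k ! j))
      + (\<Sum>k'<K. \<Sum>r<lsz k'. Pm k' k $$ (r, i) * copy_multiplier z k' (dup k' ! r))
      = (\<Sum>b<N. Q $$ (a, b) * z $ b)"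
    unfolding Qloc_own_row_sum[OF k True] multiplier_own_col_sum[OF k True] sum.distrib[symmetric] a_def
    by (intro sum.cong) auto
  also have "\<dots> = c $ a"
    using arg_cong[OF grad, of "\<lambda>v. v $ a"] a(2) Q_carrier z by (simp add: scalar_prod_def atLeast0LessThan)
  also have "\<dots> = cloc c Ns own dup k $ i"
    using a(1) i True unfolding cloc_def a_def by simp
  finally show ?thesis .
next
  case False
  define r where "r = i - osz k"
  have i_eq: "i = osz k + r" and r: "r < lsz k" using False i unfolding r_def zsz_eq by auto
  have a: "dup k ! r \<notin> Ns k" using dup_nth_mem[OF k r] unfolding dupset_iff by simp
  have "(\<Sum>k'<K. \<Sum>r'<lsz k'. Pm k' k $$ (r', i) * copy_multiplier z k' (dup k' ! r'))
      = (\<Sum>k'<K. if k' = k then copy_multiplier z k (dup k ! r) else 0)"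
    using k i False by (intro sum.cong refl) (simp add: PiM_diag_col_sum PiM_off_col_sum r_def)
  also have "\<dots> = copy_multiplier z k (dup k ! r)" using k by simp
  moreover have "(\<Sum>j<zsz k. Qk k $$ (i, j) * z $ (nbar own dup k ! j)) = - copy_multiplier z k (dup k ! r)"
    unfolding i_eq Qloc_dup_row_sum[OF k r] copy_multiplier_def by simp
  moreover have "cloc c Ns own dup k $ i = 0" using i a unfolding cloc_def i_eq by simp
  ultimately show ?thesis by simp
qed

lemma local_kkt_unique:
  assumes k: "k < K"
    and z_rows: "\<And>i. i < zsz k \<Longrightarrow> (\<Sum>j<zsz k. Qk k $$ (i, j) * z j) + (\<Sum>r<lsz k. Pm k k $$ (r, i) * y r) = 0"
    and y_rows: "\<And>r. r < lsz k \<Longrightarrow> (\<Sum>j<zsz k. Pm k k $$ (r, j) * z j) = 0"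
  shows "(\<forall>j<zsz k. z j = 0) \<and> (\<forall>r<lsz k. y r = 0)"
proof -
  have z_dup: "z (osz k + r) = 0" if "r < lsz k" for r
    using y_rows[OF that] by (simp add: PiM_diag_row_sum[OF that])
  have z_own: "z j = 0" if "j < osz k" for j
  proof (rule pos_def_principal_kernel[OF Q_carrier Q_pos_def _ _ _ that])
    show "distinct (own k)" "set (own k) \<subseteq> {..<N}" using own_enum[OF k] Ns_subset[OF k] by auto
    fix i assume i: "i < osz k"
    have "(\<Sum>j<zsz k. Qk k $$ (i, j) * z j) = 0"
      using z_rows[of i] i by (simp add: PiM_diag_col_sum zsz_eq)
    moreover have "(\<Sum>j<osz k. Qk k $$ (i, j) * z j) = (\<Sum>j<osz k. Q $$ (own k ! i, own k ! j) * z j)"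
      using i own_nth_mem[OF k] by (intro sum.cong refl) (simp add: Qloc_index zsz_eq)
    moreover have "(\<Sum>j<zsz k. Qk k $$ (i, j) * z j) = (\<Sum>j<osz k. Qk k $$ (i, j) * z j)"
      unfolding zsz_eq sum_lessThan_add by (simp add: z_dup)
    ultimately show "(\<Sum>j<osz k. Q $$ (own k ! i, own k ! j) * z j) = 0" by simp
  qed
  have z_zero: "\<forall>j<zsz k. z j = 0"
    using z_own z_dup unfolding zsz_eq by (metis add_diff_inverse_nat nat_add_left_cancel_less)
  have "y r = 0" if r: "r < lsz k" for r
    using z_rows[of "osz k + r"] r z_zero by (simp add: PiM_diag_col_sum zsz_eq)
  then show ?thesis using z_zero by blast
qed

text \<open>\<open>L\<close> is block lower triangular with the local KKT matrices on its diagonal, so a kernel vector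
  vanishes block by block.\<close>

lemma Lmat_kernel:
  assumes L0: "L *\<^sub>v lifted_vec z y = 0\<^sub>v nlift"
  shows "lifted_vec z y = 0\<^sub>v nlift"
proof -
  have rows: "block_vec K zsz (\<lambda>k i. (\<Sum>j<zsz k. Qk k $$ (i, j) * z k j)
        + (\<Sum>k'<k. \<Sum>r<lsz k'. Pm k' k $$ (r, i) * y k' r) + (\<Sum>r<lsz k. Pm k k $$ (r, i) * y k r))
      = block_vec K zsz (\<lambda>k i. 0)
    \<and> block_vec K lsz (\<lambda>k r. (\<Sum>k'<k. \<Sum>j<zsz k'. Pm k k' $$ (r, j) * z k' j)
        + (\<Sum>j<zsz k. Pm k k $$ (r, j) * z k j))
      = block_vec K lsz (\<lambda>k r. 0)"
    using L0 unfolding Lmat_mult_lifted_vec zero_append_vec zero_block_vec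
    by (simp add: append_vec_eq[OF block_vec_carrier block_vec_carrier])
  have "k < K \<longrightarrow> (\<forall>j<zsz k. z k j = 0) \<and> (\<forall>r<lsz k. y k r = 0)" for k
  proof (induction k rule: less_induct)
    case (less k)
    show ?case
    proof
      assume k: "k < K"
      have z_prev: "(\<Sum>k'<k. \<Sum>j<zsz k'. Pm k k' $$ (r, j) * z k' j) = 0" for r
        using less k by (intro sum.neutral ballI) auto
      have y_prev: "(\<Sum>k'<k. \<Sum>r<lsz k'. Pm k' k $$ (r, i) * y k' r) = 0" for i
        using less k by (intro sum.neutral ballI) auto
      show "(\<forall>j<zsz k. z k j = 0) \<and> (\<forall>r<lsz k. y k r = 0)"
      proof (rule local_kkt_unique[OF k])
        fix i assume "i < zsz k"
        then show "(\<Sum>j<zsz k. Qk k $$ (i, j) * z k j) + (\<Sum>r<lsz k. Pm k k $$ (r, i) * y k r) = 0"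
          using rows k y_prev unfolding block_vec_eq_iff by auto
      next
        fix r assume "r < lsz k"
        then show "(\<Sum>j<zsz k. Pm k k $$ (r, j) * z k j) = 0"
          using rows k z_prev unfolding block_vec_eq_iff by auto
      qed
    qed
  qed
  then have "lifted_vec z y = lifted_vec (\<lambda>k j. 0) (\<lambda>k r. 0)"
    unfolding lifted_vec_def by (auto intro!: arg_cong2[where f = append_vec] block_vec_cong)
  then show ?thesis by (simp add: lifted_vec_zero)
qed

lemma Lmat_left_inverse:
  "the (mat_inverse L) \<in> carrier_mat nlift nlift" "the (mat_inverse L) * L = 1\<^sub>m nlift"
proof -
  have "v = 0\<^sub>v nlift" if "v \<in> carrier_vec nlift" "L *\<^sub>v v = 0\<^sub>v nlift" for v
    using that Lmat_kernel by (metis lifted_vec_cases)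
  then show "the (mat_inverse L) \<in> carrier_mat nlift nlift" "the (mat_inverse L) * L = 1\<^sub>m nlift"
    using mat_inverse_of_trivial_kernel[OF Lmat_carrier] by blast+
qed

end

theorem proposition1:
  fixes N K :: nat and Q :: "real mat" and c :: "real vec" and zstar :: "real vec"
    and Ns :: "nat \<Rightarrow> nat set" and own dup :: "nat \<Rightarrow> nat list"
    and zs :: "nat \<Rightarrow> nat \<Rightarrow> nat \<Rightarrow> real" and lams :: "nat \<Rightarrow> nat \<Rightarrow> nat \<Rightarrow> real"
  assumes Qdim: "Q \<in> carrier_mat N N" and cdim: "c \<in> carrier_vec N"
    and Qsym: "transpose_mat Q = Q"
    and Qpd: "\<And>x. x \<in> carrier_vec N \<Longrightarrow> x \<noteq> 0\<^sub>v N \<Longrightarrow> x \<bullet> (Q *\<^sub>v x) > 0"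
    and zstar_dim: "zstar \<in> carrier_vec N"
    and zstar_min: "\<And>z. z \<in> carrier_vec N \<Longrightarrow>
        1/2 * (zstar \<bullet> (Q *\<^sub>v zstar)) - c \<bullet> zstar \<le> 1/2 * (z \<bullet> (Q *\<^sub>v z)) - c \<bullet> z"
    and part_ne: "\<And>k. k < K \<Longrightarrow> Ns k \<noteq> {}"
    and part_disj: "\<And>k k'. k < K \<Longrightarrow> k' < K \<Longrightarrow> k \<noteq> k' \<Longrightarrow> Ns k \<inter> Ns k' = {}"
    and part_cover: "(\<Union>k<K. Ns k) = {..<N}"
    and own_enum: "\<And>k. k < K \<Longrightarrow> distinct (own k) \<and> set (own k) = Ns k"
    and dup_enum: "\<And>k. k < K \<Longrightarrow> distinct (dup k) \<and> set (dup k) = dupset Q N Ns k"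
    and GS_z: "\<And>l k i. k < K \<Longrightarrow> i < lenk own dup k \<Longrightarrow>
        (\<Sum>j<lenk own dup k. Qloc Q Ns own dup k $$ (i, j) * zs (Suc l) k j)
        + (\<Sum>r<length (dup k). PiM own dup k k $$ (r, i) * lams (Suc l) k r)
        = cloc c Ns own dup k $ i
          - (\<Sum>k'<k. \<Sum>r<length (dup k'). PiM own dup k' k $$ (r, i) * lams (Suc l) k' r)
          - (\<Sum>k'\<in>{k<..<K}. \<Sum>r<length (dup k'). PiM own dup k' k $$ (r, i) * lams l k' r)"
    and GS_lam: "\<And>l k r. k < K \<Longrightarrow> r < length (dup k) \<Longrightarrow>
        (\<Sum>j<lenk own dup k. PiM own dup k k $$ (r, j) * zs (Suc l) k j)
        = - (\<Sum>k'<k. \<Sum>j<lenk own dup k'. PiM own dup k k' $$ (r, j) * zs (Suc l) k' j)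
          - (\<Sum>k'\<in>{k<..<K}. \<Sum>j<lenk own dup k'. PiM own dup k k' $$ (r, j) * zs l k' j)"
    and spec: "\<And>\<mu>. eigenvalue (map_mat complex_of_real (Sigma Q Ns K own dup)) \<mu> \<Longrightarrow> cmod \<mu> < 1"
  shows "\<forall>k<K. \<forall>i<lenk own dup k. (\<lambda>l. zs l k i) \<longlonglongrightarrow> zstar $ (nbar own dup k ! i)"
proof -
  interpret lifted_qp N K Q c Ns own dup
    by unfold_locales (fact Qdim Qsym Qpd part_disj part_cover own_enum dup_enum)+
  have grad: "Q *\<^sub>v zstar = c"
    by (rule quadratic_minimizer_stationary[OF Qdim Qsym cdim zstar_dim zstar_min])
  define zbar where "zbar k j = zstar $ (nbar own dup k ! j)" for k j
  define ybar where "ybar k r = copy_multiplier zstar k (dup k ! r)" for k r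
  have fixed: "L *\<^sub>v lifted_vec zbar ybar = lifted_rhs + R *\<^sub>v lifted_vec zbar ybar"
    by (rule kkt_matrix_form)
      (simp_all add: zbar_def ybar_def lifted_stationarity[OF grad zstar_dim] lifted_consensus)
  have sweep: "L *\<^sub>v lifted_vec (zs (Suc l)) (lams (Suc l)) = lifted_rhs + R *\<^sub>v lifted_vec (zs l) (lams l)" for l
    by (rule sweep_matrix_form) (use GS_z GS_lam in auto)
  show ?thesis
  proof (intro allI impI)
    fix k i assume k: "k < K" and i: "i < zsz k"
    have "(\<lambda>l. lifted_vec (zs l) (lams l) $ (off zsz k + i)) \<longlonglongrightarrow> lifted_vec zbar ybar $ (off zsz k + i)"
      using spec[unfolded Sigma_def] off_add_less[of k K i zsz] k i
      by (intro splitting_iteration_tendsto[where x = "\<lambda>l. lifted_vec (zs l) (lams l)",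
            OF Lmat_carrier Rmat_carrier Lmat_left_inverse _ _ _ _ sweep fixed])
        (simp_all add: lifted_rhs_def)
    then show "(\<lambda>l. zs l k i) \<longlonglongrightarrow> zstar $ (nbar own dup k ! i)" using k i by (simp add: zbar_def)
  qed
qed

end
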